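(* Let $\mathscr H$ be a complex Hilbert space and $\mathbf{S}=(S_1,\dots,S_d)$, $\mathbf{T}=(T_1,\dots,T_d)\in\mathbb{B}(\mathscr H)^d$ with $S_kT_k=T_kS_k$ for all $k=1,\dots,d$. Then $$w_e(\mathbf{S}\mathbf{T})\le 2\sqrt{d}\,w_e(\mathbf{S})\,w_e(\mathbf{T}).$$
   Context: $\mathbb{B}(\mathscr H)$ denotes the bounded linear operators on $\mathscr H$. For $\mathbf{T}\in\mathbb{B}(\mathscr H)^d$, $w_e(\mathbf{T})=\sup\{(\sum_{k=1}^d|\langle T_kx,x\rangle|^2)^{1/2}: \|x\|=1\}$. Products are componentwise: $\mathbf{S}\mathbf{T}=(S_1T_1,\dots,S_dT_d)$. *)

theory Defs
  imports "HOL-Analysis.Analysis"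
begin

text \<open>A complex Hilbert space is modelled as a real Hilbert space (type class
  real_inner + complete_space) together with an orthogonal complex structure J
  (multiplication by the imaginary unit): J is real-linear, J (J x) = - x, and
  J preserves the real inner product.  Complex scalar multiplication is then
  (a + i b) x = a x + b (J x).\<close>

definition complex_structure :: "('a::real_inner \<Rightarrow> 'a) \<Rightarrow> bool" where
  "complex_structure J \<longleftrightarrow> linear J \<and> (\<forall>x. J (J x) = - x) \<and> (\<forall>x y. inner (J x) (J y) = inner x y)"

text \<open>The complex inner product, linear in the first and conjugate-linear in the
  second argument: cinner J (J x) y = i * cinner J x y, and cinner J x x = norm x ^ 2.\<close>

definition cinner :: "('a::real_inner \<Rightarrow> 'a) \<Rightarrow> 'a \<Rightarrow> 'a \<Rightarrow> complex" where
  "cinner J x y = Complex (inner x y) (- inner (J x) y)"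

definition cbounded :: "('a::real_inner \<Rightarrow> 'a) \<Rightarrow> ('a \<Rightarrow> 'a) \<Rightarrow> bool" where
  "cbounded J T \<longleftrightarrow> bounded_linear T \<and> (\<forall>x. T (J x) = J (T x))"

text \<open>Euclidean operator radius of the d-tuple (T 0, ..., T (d-1)).  The 0 is inserted
  only so that the supremum is 0 on the trivial space; it does not change the value
  otherwise.\<close>

definition euclid_radius :: "('a::real_inner \<Rightarrow> 'a) \<Rightarrow> nat \<Rightarrow> (nat \<Rightarrow> 'a \<Rightarrow> 'a) \<Rightarrow> real" where
  "euclid_radius J d T =
     Sup (insert 0 ((\<lambda>x. sqrt (\<Sum>k<d. (cmod (cinner J (T k x) x))\<^sup>2)) ` {x. norm x = 1}))"

end

theory Submission
  imports Defs
begin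

text \<open>For a single pair of commuting operators with numerical radii at most 1, put
  \<open>V\<^sub>1 = A + B\<close> and \<open>V\<^sub>2 = i(A - B)\<close>: both have numerical radius at most 2, and
  \<open>V\<^sub>1\<^sup>2 + V\<^sub>2\<^sup>2 = 2(AB + BA) = 4AB\<close>.  The power inequality in its elementary form
  \<open>Re \<langle>V\<^sup>2x, x\<rangle> \<le> w(V)\<^sup>2 \<parallel>x\<parallel>\<^sup>2\<close> then gives \<open>Re \<langle>ABx, x\<rangle> \<le> 2 \<parallel>x\<parallel>\<^sup>2\<close>, and rotating \<open>A\<close> by a
  unimodular scalar turns this into \<open>w(AB) \<le> 2\<close>; by homogeneity \<open>w(AB) \<le> 2 w(A) w(B)\<close>.
  Summing the squares of these bounds over the \<open>d\<close> coordinates yields the factor \<open>\<surd>d\<close>.\<close>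

definition complex_linear :: "('a::real_inner \<Rightarrow> 'a) \<Rightarrow> ('a \<Rightarrow> 'a) \<Rightarrow> bool" where
  "complex_linear J A \<longleftrightarrow> linear A \<and> (\<forall>x. A (J x) = J (A x))"

definition cscale :: "('a::real_inner \<Rightarrow> 'a) \<Rightarrow> complex \<Rightarrow> 'a \<Rightarrow> 'a" where
  "cscale J w y = Re w *\<^sub>R y + Im w *\<^sub>R J y"

definition numerical_radius_le :: "('a::real_inner \<Rightarrow> 'a) \<Rightarrow> ('a \<Rightarrow> 'a) \<Rightarrow> real \<Rightarrow> bool" where
  "numerical_radius_le J V c \<longleftrightarrow> (\<forall>u. cmod (cinner J (V u) u) \<le> c * (norm u)\<^sup>2)"

lemma Re_cinner: "Re (cinner J y x) = inner y x"
  by (simp add: cinner_def)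

lemma cinner_add_left: "linear J \<Longrightarrow> cinner J (y + z) x = cinner J y x + cinner J z x"
  by (simp add: cinner_def complex_eq_iff linear_add inner_add_left)

lemma cinner_scaleR_left: "linear J \<Longrightarrow> cinner J (r *\<^sub>R y) x = of_real r * cinner J y x"
  by (simp add: cinner_def complex_eq_iff linear_scale)

lemma cinner_scaleR_right: "cinner J y (r *\<^sub>R x) = of_real r * cinner J y x"
  by (simp add: cinner_def complex_eq_iff)

lemma cinner_J_left: "complex_structure J \<Longrightarrow> cinner J (J y) x = \<i> * cinner J y x"
  by (simp add: cinner_def complex_eq_iff complex_structure_def)

lemma cinner_cscale_left:
  assumes "complex_structure J"
  shows "cinner J (cscale J w y) x = w * cinner J y x"
proof -
  have "linear J" using assms by (simp add: complex_structure_def)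
  then have "cinner J (cscale J w y) x = of_real (Re w) * cinner J y x + of_real (Im w) * (\<i> * cinner J y x)"
    unfolding cscale_def by (simp add: cinner_add_left cinner_scaleR_left cinner_J_left[OF assms])
  also have "\<dots> = w * cinner J y x"
    by (simp add: complex_eq_iff)
  finally show ?thesis .
qed

lemma cmod_cinner_le:
  assumes "complex_structure J"
  shows "cmod (cinner J y x) \<le> 2 * norm y * norm x"
proof -
  have "norm (J y) = norm y"
    using assms by (simp add: complex_structure_def norm_eq_sqrt_inner)
  have "cmod (cinner J y x) \<le> \<bar>inner y x\<bar> + \<bar>inner (J y) x\<bar>"
    using cmod_le[of "cinner J y x"] by (simp add: cinner_def)
  also have "\<dots> \<le> norm y * norm x + norm (J y) * norm x"
    by (intro add_mono Cauchy_Schwarz_ineq2)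
  finally show ?thesis
    using \<open>norm (J y) = norm y\<close> by (simp add: mult_ac)
qed

lemma cnj_sgn_mult_self: "cnj (sgn q) * q = complex_of_real (cmod q)"
proof (cases "q = 0")
  case False
  have "cnj q * q = of_real ((cmod q)\<^sup>2)"
    by (metis complex_norm_square mult.commute)
  then show ?thesis
    using False by (simp add: sgn_div_norm scaleR_conv_of_real power2_eq_square field_simps)
qed simp

lemma cbounded_imp_complex_linear: "cbounded J A \<Longrightarrow> complex_linear J A"
  by (simp add: cbounded_def complex_linear_def bounded_linear.linear)

lemma complex_linear_compose:
  "complex_linear J A \<Longrightarrow> complex_linear J B \<Longrightarrow> complex_linear J (\<lambda>u. A (B u))"
  unfolding complex_linear_def using linear_compose[of B A] by (simp add: o_def)

lemma complex_linear_cscale: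
  assumes "complex_structure J"
  shows "complex_linear J (cscale J w)"
proof -
  have "linear J" and "\<And>x. J (J x) = - x"
    using assms by (auto simp: complex_structure_def)
  then show ?thesis
    unfolding complex_linear_def cscale_def
    by (auto intro!: linearI simp: linear_add linear_scale algebra_simps)
qed

lemma complex_linear_scaleR:
  "complex_linear J A \<Longrightarrow> linear J \<Longrightarrow> complex_linear J (\<lambda>u. r *\<^sub>R A u)"
  unfolding complex_linear_def using linear_compose_scale_right[of A r] by (simp add: linear_scale)

lemma complex_linear_commute_cscale:
  "complex_linear J A \<Longrightarrow> A (cscale J w y) = cscale J w (A y)"
  unfolding complex_linear_def cscale_def by (simp add: linear_add linear_scale)

lemma numerical_radius_le_mono:
  "numerical_radius_le J V a \<Longrightarrow> a \<le> b \<Longrightarrow> numerical_radius_le J V b"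
  unfolding numerical_radius_le_def by (meson mult_right_mono order_trans zero_le_power2)

lemma numerical_radius_le_abs_inner:
  "numerical_radius_le J V c \<Longrightarrow> \<bar>inner (V u) u\<bar> \<le> c * (norm u)\<^sup>2"
  unfolding numerical_radius_le_def by (metis Re_cinner abs_Re_le_cmod order_trans)

lemma numerical_radius_le_add:
  assumes "linear J" "numerical_radius_le J A a" "numerical_radius_le J B b"
  shows "numerical_radius_le J (\<lambda>u. A u + B u) (a + b)"
  unfolding numerical_radius_le_def
proof
  fix u
  have "cmod (cinner J (A u + B u) u) \<le> cmod (cinner J (A u) u) + cmod (cinner J (B u) u)"
    using assms(1) by (simp add: cinner_add_left norm_triangle_ineq)
  also have "\<dots> \<le> (a + b) * (norm u)\<^sup>2"
    using assms(2,3) unfolding numerical_radius_le_def by (simp add: distrib_right add_mono)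
  finally show "cmod (cinner J (A u + B u) u) \<le> (a + b) * (norm u)\<^sup>2" .
qed

lemma numerical_radius_le_cscale:
  assumes "complex_structure J" "numerical_radius_le J V c"
  shows "numerical_radius_le J (\<lambda>u. cscale J w (V u)) (cmod w * c)"
  using assms unfolding numerical_radius_le_def
  by (simp add: cinner_cscale_left norm_mult mult.assoc mult_left_mono)

lemma numerical_radius_le_scaleR:
  assumes "complex_structure J" "numerical_radius_le J V c"
  shows "numerical_radius_le J (\<lambda>u. r *\<^sub>R V u) (\<bar>r\<bar> * c)"
  using numerical_radius_le_cscale[OF assms, of "of_real r"] by (simp add: cscale_def)

text \<open>With
  \<open>y = cx + Vx\<close> and \<open>z = cx - Vx\<close> one has \<open>c\<^sup>2x - V\<^sup>2x = cy - Vy = cz + Vz\<close>, and pairing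
  with \<open>y + z = 2cx\<close> exhibits \<open>2c \<langle>c\<^sup>2x - V\<^sup>2x, x\<rangle>\<close> as a sum of two nonnegative terms.\<close>

lemma inner_compose_self_le:
  assumes lin: "linear V" and c: "c > 0"
    and bound: "\<And>u. \<bar>inner (V u) u\<bar> \<le> c * (norm u)\<^sup>2"
  shows "inner (V (V x)) x \<le> c\<^sup>2 * (norm x)\<^sup>2"
proof -
  define y where "y = c *\<^sub>R x + V x"
  define z where "z = c *\<^sub>R x - V x"
  define w where "w = c\<^sup>2 *\<^sub>R x - V (V x)"
  have wy: "w = c *\<^sub>R y - V y"
    unfolding w_def y_def using lin by (simp add: linear_add linear_scale algebra_simps power2_eq_square)
  have wz: "w = c *\<^sub>R z + V z"
    unfolding w_def z_def using lin by (simp add: linear_diff linear_scale algebra_simps power2_eq_square)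
  have "2 * c * inner w x = inner w y + inner w z"
    unfolding y_def z_def by (simp add: inner_add_right inner_diff_right algebra_simps)
  also have "\<dots> = (c * (norm y)\<^sup>2 - inner (V y) y) + (c * (norm z)\<^sup>2 + inner (V z) z)"
    by (subst wy, subst wz, simp add: inner_diff_left inner_add_left power2_norm_eq_inner)
  also have "\<dots> \<ge> 0"
    using bound[of y] bound[of z] by (simp add: abs_le_iff)
  finally have "0 \<le> inner w x"
    using c by (simp add: zero_le_mult_iff)
  then show ?thesis
    unfolding w_def by (simp add: inner_diff_left power2_norm_eq_inner)
qed

lemma inner_commuting_le_unit:
  assumes cs: "complex_structure J"
    and A: "complex_linear J A" and B: "complex_linear J B" and AB: "\<And>x. A (B x) = B (A x)"
    and wA: "numerical_radius_le J A 1" and wB: "numerical_radius_le J B 1"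
  shows "inner (A (B x)) x \<le> 2 * (norm x)\<^sup>2"
proof -
  have linJ: "linear J" and JJ: "\<And>x. J (J x) = - x"
    using cs by (auto simp: complex_structure_def)
  have linA: "linear A" and AJ: "\<And>x. A (J x) = J (A x)"
    using A by (auto simp: complex_linear_def)
  have linB: "linear B" and BJ: "\<And>x. B (J x) = J (B x)"
    using B by (auto simp: complex_linear_def)
  define V\<^sub>1 where "V\<^sub>1 = (\<lambda>u. A u + B u)"
  define V\<^sub>2 where "V\<^sub>2 = (\<lambda>u. J (A u - B u))"
  have linV\<^sub>1: "linear V\<^sub>1"
    unfolding V\<^sub>1_def by (intro linear_compose_add linA linB)
  have linV\<^sub>2: "linear V\<^sub>2"
    unfolding V\<^sub>2_def using linear_compose[OF linear_compose_sub[OF linA linB] linJ] by (simp add: o_def)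
  have wV\<^sub>1: "numerical_radius_le J V\<^sub>1 2"
    unfolding V\<^sub>1_def using numerical_radius_le_add[OF linJ wA wB] by simp
  have "numerical_radius_le J (\<lambda>u. A u - B u) 2"
    using numerical_radius_le_add[OF linJ wA numerical_radius_le_scaleR[OF cs wB, of "- 1"]] by simp
  then have wV\<^sub>2: "numerical_radius_le J V\<^sub>2 2"
    unfolding V\<^sub>2_def using numerical_radius_le_cscale[OF cs, of _ 2 \<i>] by (simp add: cscale_def)
  have "V\<^sub>2 (V\<^sub>2 x) = - (A (A x) - B (A x) - (A (B x) - B (B x)))"
    unfolding V\<^sub>2_def
    by (simp add: AJ BJ JJ linear_diff[OF linA] linear_diff[OF linB] flip: linear_diff[OF linJ])
  moreover have "V\<^sub>1 (V\<^sub>1 x) = A (A x) + A (B x) + (B (A x) + B (B x))"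
    unfolding V\<^sub>1_def by (simp add: linear_add linA linB)
  moreover have "(4::real) *\<^sub>R v = v + v + v + v" for v :: 'a
    using scaleR_left_distrib[of 2 2 v] by (simp add: scaleR_2)
  ultimately have "V\<^sub>1 (V\<^sub>1 x) + V\<^sub>2 (V\<^sub>2 x) = 4 *\<^sub>R A (B x)"
    by (simp add: AB algebra_simps)
  then have "4 * inner (A (B x)) x = inner (V\<^sub>1 (V\<^sub>1 x)) x + inner (V\<^sub>2 (V\<^sub>2 x)) x"
    by (metis inner_add_left inner_scaleR_left)
  also have "\<dots> \<le> 2\<^sup>2 * (norm x)\<^sup>2 + 2\<^sup>2 * (norm x)\<^sup>2"
    by (intro add_mono inner_compose_self_le linV\<^sub>1 linV\<^sub>2 numerical_radius_le_abs_inner[OF wV\<^sub>1]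
        numerical_radius_le_abs_inner[OF wV\<^sub>2]) simp_all
  finally show ?thesis by simp
qed

text \<open>Rotating \<open>A\<close> by \<open>w = \<bar>q\<bar>/q\<close>, where \<open>q = \<langle>ABx, x\<rangle>\<close>, makes the inner product real.\<close>

lemma cmod_cinner_commuting_le_unit:
  assumes cs: "complex_structure J"
    and A: "complex_linear J A" and B: "complex_linear J B" and AB: "\<And>x. A (B x) = B (A x)"
    and wA: "numerical_radius_le J A 1" and wB: "numerical_radius_le J B 1"
  shows "cmod (cinner J (A (B x)) x) \<le> 2 * (norm x)\<^sup>2"
proof -
  define q where "q = cinner J (A (B x)) x"
  define w where "w = cnj (sgn q)"
  define A' where "A' = (\<lambda>u. cscale J w (A u))"
  have A': "complex_linear J A'"
    unfolding A'_def by (rule complex_linear_compose[OF complex_linear_cscale[OF cs] A])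
  have A'B: "A' (B y) = B (A' y)" for y
    unfolding A'_def by (simp add: complex_linear_commute_cscale[OF B] AB)
  have "numerical_radius_le J A' (cmod w * 1)"
    unfolding A'_def by (rule numerical_radius_le_cscale[OF cs wA])
  then have wA': "numerical_radius_le J A' 1"
    by (rule numerical_radius_le_mono) (simp add: w_def norm_sgn)
  have "cmod q = Re (w * q)"
    unfolding w_def by (simp add: cnj_sgn_mult_self)
  also have "\<dots> = inner (A' (B x)) x"
    unfolding A'_def q_def by (simp only: cinner_cscale_left[OF cs, symmetric] Re_cinner)
  also have "\<dots> \<le> 2 * (norm x)\<^sup>2"
    by (rule inner_commuting_le_unit[OF cs A' B A'B wA' wB])
  finally show ?thesis unfolding q_def .
qed

text \<open>Homogeneity: scale \<open>A\<close> and \<open>B\<close> down by \<open>a + e\<close> and \<open>b + e\<close>; the \<open>e > 0\<close> keeps this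
  possible when \<open>a\<close> or \<open>b\<close> vanishes, and \<open>e \<rightarrow> 0\<close> at the end.\<close>

lemma cmod_cinner_commuting_le:
  assumes cs: "complex_structure J"
    and A: "complex_linear J A" and B: "complex_linear J B" and AB: "\<And>x. A (B x) = B (A x)"
    and wA: "numerical_radius_le J A a" and wB: "numerical_radius_le J B b"
    and a: "a \<ge> 0" and b: "b \<ge> 0"
  shows "cmod (cinner J (A (B x)) x) \<le> 2 * a * b * (norm x)\<^sup>2"
proof (rule tendsto_lowerbound)
  have "((\<lambda>e. 2 * (a + e) * (b + e) * (norm x)\<^sup>2) \<longlongrightarrow> 2 * (a + 0) * (b + 0) * (norm x)\<^sup>2) (at_right 0)"
    by (intro tendsto_intros)
  then show "((\<lambda>e. 2 * (a + e) * (b + e) * (norm x)\<^sup>2) \<longlongrightarrow> 2 * a * b * (norm x)\<^sup>2) (at_right 0)"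
    by simp
  have "cmod (cinner J (A (B x)) x) \<le> 2 * (a + e) * (b + e) * (norm x)\<^sup>2" if e: "e > 0" for e
  proof -
    define A' where "A' = (\<lambda>u. (1 / (a + e)) *\<^sub>R A u)"
    define B' where "B' = (\<lambda>u. (1 / (b + e)) *\<^sub>R B u)"
    have linA: "linear A" and linB: "linear B" and linJ: "linear J"
      using A B cs by (auto simp: complex_linear_def complex_structure_def)
    have A': "complex_linear J A'" and B': "complex_linear J B'"
      unfolding A'_def B'_def by (intro complex_linear_scaleR A B linJ)+
    have A'B': "A' (B' y) = B' (A' y)" for y
      unfolding A'_def B'_def by (simp add: linear_scale linA linB AB)
    have "numerical_radius_le J A' (\<bar>1 / (a + e)\<bar> * a)"
      unfolding A'_def by (rule numerical_radius_le_scaleR[OF cs wA])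
    then have wA': "numerical_radius_le J A' 1"
      by (rule numerical_radius_le_mono) (use a e in simp)
    have "numerical_radius_le J B' (\<bar>1 / (b + e)\<bar> * b)"
      unfolding B'_def by (rule numerical_radius_le_scaleR[OF cs wB])
    then have wB': "numerical_radius_le J B' 1"
      by (rule numerical_radius_le_mono) (use b e in simp)
    have "A (B x) = ((a + e) * (b + e)) *\<^sub>R A' (B' x)"
      unfolding A'_def B'_def using a b e by (simp add: linear_scale linA)
    then have "cmod (cinner J (A (B x)) x) = (a + e) * (b + e) * cmod (cinner J (A' (B' x)) x)"
      by (simp only: cinner_scaleR_left[OF linJ] norm_mult norm_of_real) (use a b e in simp)
    also have "\<dots> \<le> (a + e) * (b + e) * (2 * (norm x)\<^sup>2)"
      using a b e by (intro mult_left_mono cmod_cinner_commuting_le_unit[OF cs A' B' A'B' wA' wB']) auto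
    finally show ?thesis
      by (simp add: algebra_simps)
  qed
  then show "\<forall>\<^sub>F e in at_right 0. cmod (cinner J (A (B x)) x) \<le> 2 * (a + e) * (b + e) * (norm x)\<^sup>2"
    by (intro eventually_mono[OF eventually_at_right_less])
qed (rule trivial_limit_at_right_real)

lemma bdd_above_euclid_radius:
  assumes cs: "complex_structure J" and bl: "\<And>k. k < d \<Longrightarrow> bounded_linear (V k)"
  shows "bdd_above (insert 0 ((\<lambda>x. sqrt (\<Sum>k<d. (cmod (cinner J (V k x) x))\<^sup>2)) ` {x. norm x = 1}))"
proof -
  have "\<forall>k. \<exists>K. k < d \<longrightarrow> (\<forall>x. norm (V k x) \<le> norm x * K)"
    using bl bounded_linear.bounded by blast
  then obtain K where K: "\<And>k x. k < d \<Longrightarrow> norm (V k x) \<le> norm x * K k"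
    by metis
  have "sqrt (\<Sum>k<d. (cmod (cinner J (V k x) x))\<^sup>2) \<le> sqrt (\<Sum>k<d. (2 * K k)\<^sup>2)" if x: "norm x = 1" for x
  proof (intro real_sqrt_le_mono sum_mono power_mono)
    fix k assume "k \<in> {..<d}"
    then show "cmod (cinner J (V k x) x) \<le> 2 * K k"
      using cmod_cinner_le[OF cs, of "V k x" x] K[of k x] x by simp
  qed simp
  moreover have "0 \<le> sqrt (\<Sum>k<d. (2 * K k)\<^sup>2)"
    by (simp add: sum_nonneg)
  ultimately show ?thesis
    by (intro bdd_aboveI[where M = "sqrt (\<Sum>k<d. (2 * K k)\<^sup>2)"]) blast
qed

lemma euclid_radius_nonneg:
  "complex_structure J \<Longrightarrow> (\<And>k. k < d \<Longrightarrow> bounded_linear (V k)) \<Longrightarrow> 0 \<le> euclid_radius J d V"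
  unfolding euclid_radius_def by (rule cSup_upper[OF _ bdd_above_euclid_radius]) auto

lemma numerical_radius_le_euclid_radius:
  assumes cs: "complex_structure J" and bl: "\<And>k. k < d \<Longrightarrow> bounded_linear (V k)" and k: "k < d"
  shows "numerical_radius_le J (V k) (euclid_radius J d V)"
  unfolding numerical_radius_le_def
proof
  fix u :: 'a
  have lin: "linear (V k)" and linJ: "linear J"
    using bl[OF k] cs by (auto simp: bounded_linear.linear complex_structure_def)
  show "cmod (cinner J (V k u) u) \<le> euclid_radius J d V * (norm u)\<^sup>2"
  proof (cases "u = 0")
    case True
    then show ?thesis
      using lin by (simp add: linear_0 cinner_def complex_eq_iff)
  next
    case False
    define x where "x = (1 / norm u) *\<^sub>R u"
    have x: "norm x = 1" and u: "u = norm u *\<^sub>R x"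
      using False by (simp_all add: x_def)
    have "(cmod (cinner J (V k x) x))\<^sup>2 \<le> (\<Sum>k<d. (cmod (cinner J (V k x) x))\<^sup>2)"
      using k by (intro member_le_sum) auto
    then have "cmod (cinner J (V k x) x) \<le> sqrt (\<Sum>k<d. (cmod (cinner J (V k x) x))\<^sup>2)"
      by (rule real_le_rsqrt)
    also have "\<dots> \<le> euclid_radius J d V"
      unfolding euclid_radius_def by (rule cSup_upper[OF _ bdd_above_euclid_radius[OF cs bl]]) (use x in auto)
    finally have "(norm u)\<^sup>2 * cmod (cinner J (V k x) x) \<le> (norm u)\<^sup>2 * euclid_radius J d V"
      by (rule mult_left_mono) simp
    moreover have "cinner J (V k u) u = of_real ((norm u)\<^sup>2) * cinner J (V k x) x"
      by (subst (1 2) u) (simp add: linear_scale[OF lin] cinner_scaleR_right cinner_scaleR_left[OF linJ] power2_eq_square)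
    ultimately show ?thesis
      by (simp add: norm_mult norm_power mult.commute)
  qed
qed

lemma euclid_radius_le:
  assumes "c \<ge> 0" and bound: "\<And>k x. k < d \<Longrightarrow> norm x = 1 \<Longrightarrow> cmod (cinner J (V k x) x) \<le> c"
  shows "euclid_radius J d V \<le> sqrt (real d) * c"
  unfolding euclid_radius_def
proof (rule cSup_least)
  fix y
  assume "y \<in> insert 0 ((\<lambda>x. sqrt (\<Sum>k<d. (cmod (cinner J (V k x) x))\<^sup>2)) ` {x. norm x = 1})"
  moreover have "sqrt (\<Sum>k<d. (cmod (cinner J (V k x) x))\<^sup>2) \<le> sqrt (real d) * c" if "norm x = 1" for x
  proof -
    have "(\<Sum>k<d. (cmod (cinner J (V k x) x))\<^sup>2) \<le> (\<Sum>k<d. c\<^sup>2)"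
      using bound that by (intro sum_mono power_mono) auto
    then have "sqrt (\<Sum>k<d. (cmod (cinner J (V k x) x))\<^sup>2) \<le> sqrt (real d * c\<^sup>2)"
      by (intro real_sqrt_le_mono) simp
    then show ?thesis
      using \<open>c \<ge> 0\<close> by (simp add: real_sqrt_mult)
  qed
  ultimately show "y \<le> sqrt (real d) * c"
    using \<open>c \<ge> 0\<close> by auto
qed simp

theorem mainTheorem6:
  fixes J :: "'a::{real_inner, complete_space} \<Rightarrow> 'a"
    and S T :: "nat \<Rightarrow> 'a \<Rightarrow> 'a"
    and d :: nat
  assumes "complex_structure J"
    and "\<And>k. k < d \<Longrightarrow> cbounded J (S k)"
    and "\<And>k. k < d \<Longrightarrow> cbounded J (T k)"
    and "\<And>k. k < d \<Longrightarrow> S k \<circ> T k = T k \<circ> S k"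
  shows "euclid_radius J d (\<lambda>k. S k \<circ> T k)
           \<le> 2 * sqrt (real d) * euclid_radius J d S * euclid_radius J d T"
proof -
  note cs = assms(1)
  have blS: "\<And>k. k < d \<Longrightarrow> bounded_linear (S k)" and blT: "\<And>k. k < d \<Longrightarrow> bounded_linear (T k)"
    using assms(2,3) by (simp_all add: cbounded_def)
  let ?a = "euclid_radius J d S" and ?b = "euclid_radius J d T"
  have a: "?a \<ge> 0" and b: "?b \<ge> 0"
    using cs blS blT by (blast intro: euclid_radius_nonneg)+
  have "cmod (cinner J ((S k \<circ> T k) x) x) \<le> 2 * ?a * ?b" if k: "k < d" and x: "norm x = 1" for k x
  proof -
    have S: "complex_linear J (S k)" and T: "complex_linear J (T k)"
      using assms(2,3)[OF k] by (simp_all add: cbounded_imp_complex_linear)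
    have ST: "S k (T k y) = T k (S k y)" for y
      using assms(4)[OF k] by (metis comp_apply)
    have wS: "numerical_radius_le J (S k) ?a" and wT: "numerical_radius_le J (T k) ?b"
      using cs blS blT k by (blast intro: numerical_radius_le_euclid_radius)+
    show ?thesis
      using cmod_cinner_commuting_le[OF cs S T ST wS wT a b, of x] x by simp
  qed
  then have "euclid_radius J d (\<lambda>k. S k \<circ> T k) \<le> sqrt (real d) * (2 * ?a * ?b)"
    using a b by (intro euclid_radius_le) simp_all
  then show ?thesis
    by (simp add: mult_ac)
qed

end
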